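(* Let $n\geq 3$, $q\geq 1$ with $\gcd(q,n-1)=1$, $k=-n+\frac{n-1}{q}$, and $\beta_0=q\delta-\theta$. Then there is an isomorphism of Coxeter systems $\sigma:(\widehat W,S)\to(\widehat W(k\Lambda_0),S(k\Lambda_0))$ with $\sigma(s_{\alpha_0})=s_{\beta_0}$ and $\sigma(s_{\alpha_i})=s_{\alpha_i}$ for $i=1,\dots,n-1$. In particular $\sigma(\widehat W_0(-\Lambda_0))=\widehat W_0(k\Lambda_0)$.
   Context: Affine $\widehat{sl}_n$ with simple roots $\alpha_0=\delta-\theta,\alpha_1,\dots,\alpha_{n-1}$ ($\theta$ the highest root of $sl_n$, $\delta$ the primitive positive imaginary root), invariant form $(\cdot|\cdot)$, real roots $\widehat\Delta^{re}$, $\alpha^\vee=2\alpha/(\alpha|\alpha)$, reflections $s_\alpha$; $\Lambda_0$ is the fundamental weight with $\Lambda_0(\alpha_j^\vee)=\delta_{0j}$, and $\widehat\rho$ satisfies $(\widehat\rho|\alpha_i^\vee)=1$ for all $i$. $\widehat W$ is the affine Weyl group with $S=\{s_{\alpha_0},\dots,s_{\alpha_{n-1}}\}$. For $\lambda$, $\widehat\Delta(\lambda)=\{\alpha\in\widehat\Delta^{re}:(\lambda+\widehat\rho|\alpha^\vee)\in\mathbb Z\}$ and $\widehat\Delta_0(\lambda)=\{\alpha\in\widehat\Delta^{re}:(\lambda+\widehat\rho|\alpha^\vee)=0\}$; $\widehat W(\lambda)$ (resp. $\widehat W_0(\lambda)$) is the group generated by reflections in $\widehat\Delta(\lambda)$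 (resp. $\widehat\Delta_0(\lambda)$), and $S(\lambda)=\{s_\alpha:\alpha\text{ simple in }\widehat\Delta^+(\lambda)\}$, so $(\widehat W(\lambda),S(\lambda))$ is a Coxeter system. Here the simple roots of $\widehat\Delta(k\Lambda_0)$ are $\beta_0,\alpha_1,\dots,\alpha_{n-1}$, $\widehat W_0(k\Lambda_0)=\{e,s_{\beta_0}\}$ and $\widehat W_0(-\Lambda_0)=\{e,s_{\alpha_0}\}$. *)

theory Defs
  imports Complex_Main
begin

text \<open>Concrete model of the (real) weight space of affine sl_n (with derivation):
  a triple (a, v, d) stands for  a Lambda_0 + v + d delta, where v : nat => real is the
  finite part written in the epsilon-coordinates eps_0, ..., eps_(n-1)
  (only the coordinates below n are relevant).\<close>

type_synonym wt = "real \<times> (nat \<Rightarrow> real) \<times> real"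

definition wadd :: "wt \<Rightarrow> wt \<Rightarrow> wt" where
  "wadd x y = (case x of (a, v, d) \<Rightarrow> case y of (a', v', d') \<Rightarrow> (a + a', \<lambda>i. v i + v' i, d + d'))"

definition wscale :: "real \<Rightarrow> wt \<Rightarrow> wt" where
  "wscale c x = (case x of (a, v, d) \<Rightarrow> (c * a, \<lambda>i. c * v i, c * d))"

definition wsub :: "wt \<Rightarrow> wt \<Rightarrow> wt" where
  "wsub x y = wadd x (wscale (-1) y)"

definition form :: "nat \<Rightarrow> wt \<Rightarrow> wt \<Rightarrow> real" where
  "form n x y = (case x of (a, v, d) \<Rightarrow> case y of (a', v', d') \<Rightarrow>
      (\<Sum>i<n. v i * v' i) + a * d' + d * a')"

definition Lambda0 :: wt where "Lambda0 = (1, \<lambda>_. 0, 0)"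
definition delta :: wt where "delta = (0, \<lambda>_. 0, 1)"

definition eps_diff :: "nat \<Rightarrow> nat \<Rightarrow> wt" where
  "eps_diff i j = (0, \<lambda>t. (if t = i then 1 else 0) - (if t = j then 1 else 0), 0)"

definition theta :: "nat \<Rightarrow> wt" where "theta n = eps_diff 0 (n - 1)"

definition alpha :: "nat \<Rightarrow> nat \<Rightarrow> wt" where
  "alpha n i = (if i = 0 then wsub delta (theta n) else eps_diff (i - 1) i)"

definition real_roots :: "nat \<Rightarrow> wt set" where
  "real_roots n = {wadd (eps_diff i j) (wscale (real_of_int m) delta) | i j m.
                    i < n \<and> j < n \<and> i \<noteq> j}"

definition pos_real_roots :: "nat \<Rightarrow> wt set" where
  "pos_real_roots n = {wadd (eps_diff i j) (wscale (real_of_int m) delta) | i j m.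
                    i < n \<and> j < n \<and> i \<noteq> j \<and> (m > 0 \<or> (m = 0 \<and> i < j))}"

definition coroot :: "nat \<Rightarrow> wt \<Rightarrow> wt" where
  "coroot n \<alpha> = wscale (2 / form n \<alpha> \<alpha>) \<alpha>"

definition refl :: "nat \<Rightarrow> wt \<Rightarrow> wt \<Rightarrow> wt" where
  "refl n \<alpha> x = wsub x (wscale (form n x (coroot n \<alpha>)) \<alpha>)"

definition rho_hat :: "nat \<Rightarrow> wt" where
  "rho_hat n = (real n, \<lambda>i. if i < n then (real n - 1) / 2 - real i else 0, 0)"

definition Delta_int :: "nat \<Rightarrow> wt \<Rightarrow> wt set" where
  "Delta_int n lam = {\<alpha> \<in> real_roots n. form n (wadd lam (rho_hat n)) (coroot n \<alpha>) \<in> \<int>}"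

definition Delta_zero :: "nat \<Rightarrow> wt \<Rightarrow> wt set" where
  "Delta_zero n lam = {\<alpha> \<in> real_roots n. form n (wadd lam (rho_hat n)) (coroot n \<alpha>) = 0}"

definition Delta_int_pos :: "nat \<Rightarrow> wt \<Rightarrow> wt set" where
  "Delta_int_pos n lam = Delta_int n lam \<inter> pos_real_roots n"

text \<open>simple roots of Delta^+(lambda): positive roots that are not a sum of two positive roots
  of the subsystem (Delta(lambda) is closed, so this is the usual basis)\<close>
definition simple_int :: "nat \<Rightarrow> wt \<Rightarrow> wt set" where
  "simple_int n lam = {\<alpha> \<in> Delta_int_pos n lam.
      \<not> (\<exists>\<beta>\<in>Delta_int_pos n lam. \<exists>\<gamma>\<in>Delta_int_pos n lam. \<alpha> = wadd \<beta> \<gamma>)}"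

inductive_set gen_group :: "('a \<Rightarrow> 'a) set \<Rightarrow> ('a \<Rightarrow> 'a) set" for G where
  gen_id: "id \<in> gen_group G"
| gen_step: "g \<in> G \<Longrightarrow> x \<in> gen_group G \<Longrightarrow> g \<circ> x \<in> gen_group G"

definition W_aff :: "nat \<Rightarrow> (wt \<Rightarrow> wt) set" where
  "W_aff n = gen_group {refl n (alpha n i) | i. i < n}"

definition S_aff :: "nat \<Rightarrow> (wt \<Rightarrow> wt) set" where
  "S_aff n = {refl n (alpha n i) | i. i < n}"

definition W_int :: "nat \<Rightarrow> wt \<Rightarrow> (wt \<Rightarrow> wt) set" where
  "W_int n lam = gen_group (refl n ` Delta_int n lam)"

definition W_zero :: "nat \<Rightarrow> wt \<Rightarrow> (wt \<Rightarrow> wt) set" where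
  "W_zero n lam = gen_group (refl n ` Delta_zero n lam)"

definition S_int :: "nat \<Rightarrow> wt \<Rightarrow> (wt \<Rightarrow> wt) set" where
  "S_int n lam = refl n ` simple_int n lam"

definition coxeter_iso :: "(('a \<Rightarrow> 'a) \<Rightarrow> ('a \<Rightarrow> 'a)) \<Rightarrow> ('a \<Rightarrow> 'a) set \<Rightarrow> ('a \<Rightarrow> 'a) set
    \<Rightarrow> ('a \<Rightarrow> 'a) set \<Rightarrow> ('a \<Rightarrow> 'a) set \<Rightarrow> bool" where
  "coxeter_iso \<sigma> W S W' S' \<longleftrightarrow> bij_betw \<sigma> W W' \<and>
      (\<forall>x\<in>W. \<forall>y\<in>W. \<sigma> (x \<circ> y) = \<sigma> x \<circ> \<sigma> y) \<and> \<sigma> ` S = S'"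

end

theory Submission
  imports Defs
begin

(* The linear map rescale q, sending a Lambda_0 + v + d delta to (a/q) Lambda_0 + v + q d delta,
   preserves the invariant form and sends the real root alpha + m delta to alpha + q m delta.
   Since k + n = (n-1)/q with q and n-1 coprime, the pairing of k Lambda_0 + rho-hat with the
   coroot of eps_i - eps_j + m delta is j - i + (n-1) m / q, which is an integer exactly when q
   divides m.  Hence Delta(k Lambda_0) is the image of all real roots under rescale q, and
   likewise Delta_0(k Lambda_0) is the image of Delta_0(-Lambda_0).  Conjugation by rescale q
   therefore maps the affine Weyl group, which is generated by all real reflections, onto
   W(k Lambda_0).  Being additive and positivity preserving, it maps the simple roots alpha_i,
   i.e. the positive roots that are not a sum of two positive roots, to the simple roots of
   Delta(k Lambda_0); alpha_0 = delta - theta goes to q delta - theta. *)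

lemma form_commute: "form n x y = form n y x"
  by (cases x; cases y) (simp add: form_def mult.commute add.commute add.left_commute)

lemma form_wadd_left: "form n (wadd x y) z = form n x z + form n y z"
  by (cases x; cases y; cases z) (simp add: form_def wadd_def algebra_simps sum.distrib)

lemma form_wscale_left: "form n (wscale c x) z = c * form n x z"
  by (cases x; cases z) (simp add: form_def wscale_def algebra_simps sum_distrib_left)

lemma form_wadd_right: "form n z (wadd x y) = form n z x + form n z y"
  by (metis form_commute form_wadd_left)

lemma form_wscale_right: "form n z (wscale c x) = c * form n z x"
  by (metis form_commute form_wscale_left)

lemmas form_linear = form_wadd_left form_wadd_right form_wscale_left form_wscale_right

lemma wadd_wscale_wscale: "wadd (wadd x (wscale p a)) (wscale r a) = wadd x (wscale (p + r) a)"
  by (cases x; cases a) (simp add: wadd_def wscale_def algebra_simps)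

lemma wadd_wscale_0: "wadd x (wscale 0 a) = x"
  by (cases x; cases a) (simp add: wadd_def wscale_def)

lemma refl_eq: "refl n a x = wadd x (wscale (- (2 / form n a a * form n x a)) a)"
proof -
  have "wscale (-1) (wscale c a) = wscale (-c) a" for c
    by (cases a) (simp add: wscale_def)
  then show ?thesis by (simp add: refl_def wsub_def coroot_def form_wscale_right)
qed

lemma refl_wscale:
  assumes "c \<noteq> 0" shows "refl n (wscale c a) = refl n a"
proof
  fix x
  have "wscale (2 / (c * (c * form n a a)) * (c * form n x a)) (wscale c a)
      = wscale (2 / form n a a * form n x a) a"
    using assms by (cases a) (simp add: wscale_def fun_eq_iff)
  then show "refl n (wscale c a) x = refl n a x"
    by (simp add: refl_def coroot_def form_wscale_left form_wscale_right)
qed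

lemma form_refl_refl:
  assumes "form n a a \<noteq> 0" shows "form n (refl n a x) (refl n a y) = form n x y"
  using assms unfolding refl_eq
  by (simp add: form_linear form_commute[of n a x] form_commute[of n a y] field_simps)

lemma refl_refl:
  assumes "form n a a \<noteq> 0" shows "refl n a (refl n a x) = x"
proof -
  let ?c = "\<lambda>y. - (2 / form n a a * form n y a)"
  have "refl n a (refl n a x) = wadd x (wscale (?c x + ?c (wadd x (wscale (?c x) a))) a)"
    unfolding refl_eq wadd_wscale_wscale ..
  also have "?c x + ?c (wadd x (wscale (?c x) a)) = 0"
    using assms by (simp add: form_linear field_simps)
  finally show ?thesis by (simp add: wadd_wscale_0)
qed

lemma refl_wadd_wscale: "refl n a (wadd x (wscale c b)) = wadd (refl n a x) (wscale c (refl n a b))"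
proof -
  have "wadd (wadd x (wscale c b)) (wscale (p + c * r) a)
      = wadd (wadd x (wscale p a)) (wscale c (wadd b (wscale r a)))" for p r
    by (cases x; cases a; cases b) (simp add: wadd_def wscale_def algebra_simps)
  moreover have "- (2 / form n a a * form n (wadd x (wscale c b)) a)
      = - (2 / form n a a * form n x a) + c * - (2 / form n a a * form n b a)"
    by (simp add: form_linear algebra_simps)
  ultimately show ?thesis by (simp only: refl_eq)
qed

lemma refl_refl_conj:
  assumes "form n a a \<noteq> 0"
  shows "refl n (refl n a b) = refl n a \<circ> refl n b \<circ> refl n a"
proof
  fix x
  have "(refl n a \<circ> refl n b \<circ> refl n a) x
      = wadd x (wscale (- (2 / form n b b * form n (refl n a x) b)) (refl n a b))"
    by (simp add: refl_eq[of n b] refl_wadd_wscale refl_refl[OF assms])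
  also have "form n (refl n a x) b = form n x (refl n a b)"
    using form_refl_refl[OF assms, of "refl n a x" b] by (simp add: refl_refl[OF assms])
  also have "form n b b = form n (refl n a b) (refl n a b)"
    using form_refl_refl[OF assms] by simp
  finally show "refl n (refl n a b) x = (refl n a \<circ> refl n b \<circ> refl n a) x"
    by (simp add: refl_eq)
qed

definition root :: "nat \<Rightarrow> nat \<Rightarrow> int \<Rightarrow> wt" where
  "root i j m = (0, \<lambda>t. (if t = i then 1 else 0) - (if t = j then 1 else 0), real_of_int m)"

lemma wadd_eps_diff_delta: "wadd (eps_diff i j) (wscale (real_of_int m) delta) = root i j m"
  by (simp add: wadd_def wscale_def eps_diff_def delta_def root_def)

lemma real_roots_eq: "real_roots n = {root i j m | i j m. i < n \<and> j < n \<and> i \<noteq> j}"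
  by (simp add: real_roots_def wadd_eps_diff_delta)

lemma pos_real_roots_eq:
  "pos_real_roots n = {root i j m | i j m. i < n \<and> j < n \<and> i \<noteq> j \<and> (0 < m \<or> m = 0 \<and> i < j)}"
  by (simp add: pos_real_roots_def wadd_eps_diff_delta)

lemma root_eq_iff:
  assumes "i \<noteq> j" "i' \<noteq> j'"
  shows "root i j m = root i' j' m' \<longleftrightarrow> i = i' \<and> j = j' \<and> m = m'"
proof
  assume "root i j m = root i' j' m'"
  then have coord: "(if t = i then 1 else 0) - (if t = j then 1 else 0)
      = (if t = i' then 1 else 0) - (if t = j' then (1::real) else 0)" and "m = m'" for t
    by (auto simp: root_def fun_eq_iff)
  from coord[of i] coord[of j] show "i = i' \<and> j = j' \<and> m = m'"
    using assms \<open>m = m'\<close> by (auto split: if_splits)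
qed simp

lemma root_in_real_roots_iff: "i \<noteq> j \<Longrightarrow> root i j m \<in> real_roots n \<longleftrightarrow> i < n \<and> j < n"
  unfolding real_roots_eq by (auto simp: root_eq_iff)

lemma root_in_pos_real_roots_iff:
  "i \<noteq> j \<Longrightarrow> root i j m \<in> pos_real_roots n \<longleftrightarrow> i < n \<and> j < n \<and> (0 < m \<or> m = 0 \<and> i < j)"
  unfolding pos_real_roots_eq by (auto simp: root_eq_iff)

lemma alpha_0_eq: "n \<ge> 1 \<Longrightarrow> alpha n 0 = root (n - 1) 0 1"
  by (auto simp: alpha_def wsub_def wadd_def wscale_def delta_def theta_def eps_diff_def root_def
      fun_eq_iff)

lemma alpha_eq: "i \<noteq> 0 \<Longrightarrow> alpha n i = root (i - 1) i 0"
  by (simp add: alpha_def eps_diff_def root_def)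

lemma wadd_root_root: "wadd (root i j m) (root j l m') = root i l (m + m')"
  by (simp add: wadd_def root_def fun_eq_iff)

lemma root_opposite: "root j i (- m) = wscale (-1) (root i j m)"
  by (simp add: wscale_def root_def fun_eq_iff)

lemma sum_mult_indicator_diff:
  fixes v :: "nat \<Rightarrow> real"
  assumes "i < n" "j < n"
  shows "(\<Sum>t<n. v t * ((if t = i then 1 else 0) - (if t = j then 1 else 0))) = v i - v j"
proof -
  have "(\<Sum>t<n. v t * ((if t = i then 1 else 0) - (if t = j then 1 else 0)))
      = (\<Sum>t<n. if t = i then v t else 0) - (\<Sum>t<n. if t = j then v t else 0)"
    by (subst sum_subtractf[symmetric]) (rule sum.cong, auto)
  then show ?thesis using assms by simp
qed

lemma form_root_right: "i < n \<Longrightarrow> j < n \<Longrightarrow> form n (c, v, d) (root i j m) = v i - v j + c * m"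
  by (simp add: form_def root_def sum_mult_indicator_diff)

lemma form_root_root:
  assumes "i < n" "j < n" "i \<noteq> j" shows "form n (root i j m) (root i j m) = 2"
proof -
  have unfold:
    "root i j m = (0, \<lambda>t. (if t = i then 1 else 0) - (if t = j then 1 else 0), real_of_int m)"
    by (simp add: root_def)
  show ?thesis using assms by (subst (1) unfold) (simp add: form_root_right)
qed

lemma coroot_root: "i < n \<Longrightarrow> j < n \<Longrightarrow> i \<noteq> j \<Longrightarrow> coroot n (root i j m) = root i j m"
  by (simp add: coroot_def form_root_root) (simp add: wscale_def root_def)

lemma refl_root_root:
  assumes "i < n" "j < n" "l < n" "i \<noteq> j" "j \<noteq> l" "i \<noteq> l"
  shows "refl n (root i j m) (root j l m') = root i l (m + m')"
proof -
  have "form n (root j l m') (root i j m) = -1"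
    using assms by (simp add: root_def[of j l m'] form_root_right)
  then show ?thesis
    using assms
    by (simp add: refl_eq form_root_root) (auto simp: wadd_def wscale_def root_def fun_eq_iff)
qed

lemma refl_root_opposite: "refl n (root j i (- m)) = refl n (root i j m)"
  by (simp add: root_opposite refl_wscale)

lemma third_index: "(n::nat) \<ge> 3 \<Longrightarrow> \<exists>l<n. l \<noteq> i \<and> l \<noteq> j"
  by (rule exI[of _ "if 0 \<notin> {i, j} then 0 else if 1 \<notin> {i, j} then 1 else 2"]) auto

section \<open>The affine Weyl group is generated by all real reflections\<close>

lemma gen_group_generator: "g \<in> G \<Longrightarrow> g \<in> gen_group G"
  using gen_group.gen_step[OF _ gen_group.gen_id, of g G] by simp

lemma gen_group_comp: "x \<in> gen_group G \<Longrightarrow> y \<in> gen_group G \<Longrightarrow> x \<circ> y \<in> gen_group G"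
  by (induction x rule: gen_group.induct) (auto simp: comp_assoc intro: gen_group.intros)

lemma gen_group_subset:
  assumes "G \<subseteq> gen_group H" shows "gen_group G \<subseteq> gen_group H"
proof
  fix x assume "x \<in> gen_group G"
  then show "x \<in> gen_group H"
  proof (induction x rule: gen_group.induct)
    case gen_id
    show ?case by (rule gen_group.gen_id)
  next
    case (gen_step g x)
    then show ?case using assms by (meson gen_group_comp subsetD)
  qed
qed

lemma gen_group_image_hom:
  assumes hom_id: "h id = id" and hom_comp: "\<And>f g. h (f \<circ> g) = h f \<circ> h g"
  shows "h ` gen_group G = gen_group (h ` G)"
proof
  show "h ` gen_group G \<subseteq> gen_group (h ` G)"
  proof clarify
    fix x assume "x \<in> gen_group G"
    then show "h x \<in> gen_group (h ` G)"
    proof (induction x rule: gen_group.induct)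
      case gen_id
      show ?case unfolding hom_id by (rule gen_group.gen_id)
    next
      case (gen_step g x)
      then show ?case unfolding hom_comp by (intro gen_group.gen_step) auto
    qed
  qed
  show "gen_group (h ` G) \<subseteq> h ` gen_group G"
  proof
    fix y assume "y \<in> gen_group (h ` G)"
    then show "y \<in> h ` gen_group G"
    proof (induction y rule: gen_group.induct)
      case gen_id
      show ?case using gen_group.gen_id hom_id by (metis image_eqI)
    next
      case (gen_step g x)
      then obtain g' x' where "g' \<in> G" "g = h g'" "x' \<in> gen_group G" "x = h x'" by blast
      then show ?case using hom_comp[of g' x'] gen_group.gen_step[of g' G x'] by (metis image_eqI)
    qed
  qed
qed

lemma refl_refl_in_W_aff:
  "refl n a \<in> W_aff n \<Longrightarrow> refl n b \<in> W_aff n \<Longrightarrow> form n a a \<noteq> 0 \<Longrightarrow> refl n (refl n a b) \<in> W_aff n"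
  unfolding W_aff_def by (simp add: refl_refl_conj gen_group_comp)

lemma refl_root_add_in_W_aff:
  assumes "refl n (root i j m) \<in> W_aff n" "refl n (root j l m') \<in> W_aff n"
    and "i < n" "j < n" "l < n" "i \<noteq> j" "j \<noteq> l" "i \<noteq> l"
  shows "refl n (root i l (m + m')) \<in> W_aff n"
  using refl_refl_in_W_aff[OF assms(1,2)] assms(3-) by (simp add: form_root_root refl_root_root)

lemma refl_finite_root_in_W_aff:
  assumes "i < n" "j < n" "i \<noteq> j" shows "refl n (root i j 0) \<in> W_aff n"
proof -
  have simple: "refl n (root j (Suc j) 0) \<in> W_aff n" if "Suc j < n" for j
    using that alpha_eq[of "Suc j" n] unfolding W_aff_def by (intro gen_group_generator) force
  have ascending: "refl n (root i j 0) \<in> W_aff n" if "i < j" "j < n" for i j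
    using that
  proof (induction j)
    case (Suc j)
    then show ?case
      using refl_root_add_in_W_aff[of n i j 0 "Suc j" 0] simple[of j] by (cases "i = j") auto
  qed simp
  show ?thesis
    using assms ascending[of i j] ascending[of j i] refl_root_opposite[of n i j 0]
    by (cases "i < j") auto
qed

lemma refl_root_in_W_aff_transfer:
  assumes "refl n (root a b m) \<in> W_aff n" "a < n" "b < n" "a \<noteq> b"
    and "n \<ge> 3" "i < n" "j < n" "i \<noteq> j"
  shows "refl n (root i j m) \<in> W_aff n"
proof -
  have to_b: "refl n (root i b m) \<in> W_aff n" if "i < n" "i \<noteq> b" for i
    using refl_root_add_in_W_aff[OF refl_finite_root_in_W_aff assms(1), of i] assms that
    by (cases "i = a") auto
  have from_other: "refl n (root i j m) \<in> W_aff n" if "i < n" "j < n" "i \<noteq> j" "i \<noteq> b" for i j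
    using refl_root_add_in_W_aff[OF to_b refl_finite_root_in_W_aff, of i j] to_b[of i] assms(3) that
    by (cases "j = b") auto
  show ?thesis
  proof (cases "i = b")
    case True
    obtain l where "l < n" "l \<noteq> i" "l \<noteq> j" using third_index[OF assms(5)] by blast
    then show ?thesis
      using refl_root_add_in_W_aff[OF refl_finite_root_in_W_aff from_other, of i l j] assms True
      by auto
  qed (use from_other assms in auto)
qed

lemma refl_root_in_W_aff:
  assumes "n \<ge> 3" "i < n" "j < n" "i \<noteq> j"
  shows "refl n (root i j m) \<in> W_aff n"
proof -
  have level_1: "refl n (root i j 1) \<in> W_aff n" if "i < n" "j < n" "i \<noteq> j" for i j
  proof (rule refl_root_in_W_aff_transfer[of n "n - 1" 0])
    have "refl n (root (n - 1) 0 1) = refl n (alpha n 0)"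
      using assms(1) by (simp add: alpha_0_eq)
    then show "refl n (root (n - 1) 0 1) \<in> W_aff n"
      using assms(1) unfolding W_aff_def by (intro gen_group_generator) auto
  qed (use assms that in auto)
  have nonneg: "refl n (root i j (int k)) \<in> W_aff n" if "i < n" "j < n" "i \<noteq> j" for k i j
    using that
  proof (induction k arbitrary: i j)
    case 0
    then show ?case using refl_finite_root_in_W_aff by simp
  next
    case (Suc k)
    obtain l where "l < n" "l \<noteq> i" "l \<noteq> j" using third_index[OF assms(1)] by blast
    with Suc show ?case
      using refl_root_add_in_W_aff[OF Suc.IH level_1, of i l j] by (simp add: add.commute)
  qed
  show ?thesis
  proof (cases "m \<ge> 0")
    case True
    then show ?thesis using nonneg[of i j "nat m"] assms by simp
  next
    case False
    then show ?thesis
      using nonneg[of j i "nat (- m)"] assms refl_root_opposite[of n j i m] by simp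
  qed
qed

lemma W_aff_eq_real_roots:
  assumes "n \<ge> 3" shows "W_aff n = gen_group (refl n ` real_roots n)"
proof
  show "gen_group (refl n ` real_roots n) \<subseteq> W_aff n"
    unfolding W_aff_def
    by (rule gen_group_subset)
      (use refl_root_in_W_aff[OF assms] in \<open>auto simp: real_roots_eq W_aff_def\<close>)
  have "refl n (alpha n i) \<in> refl n ` real_roots n" if "i < n" for i
    using assms that
    by (cases "i = 0") (auto simp: alpha_0_eq alpha_eq root_in_real_roots_iff)
  then show "W_aff n \<subseteq> gen_group (refl n ` real_roots n)"
    unfolding W_aff_def by (intro gen_group_subset) (auto intro: gen_group_generator)
qed

section \<open>Rescaling the null direction\<close>

definition rescale :: "real \<Rightarrow> wt \<Rightarrow> wt" where
  "rescale r x = (case x of (a, v, d) \<Rightarrow> (a / r, v, r * d))"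

definition rescale_conj :: "real \<Rightarrow> (wt \<Rightarrow> wt) \<Rightarrow> wt \<Rightarrow> wt" where
  "rescale_conj r w = rescale r \<circ> w \<circ> rescale (inverse r)"

lemma rescale_rescale_inverse: "r \<noteq> 0 \<Longrightarrow> rescale r (rescale (inverse r) x) = x"
  by (cases x) (simp add: rescale_def field_simps)

lemma rescale_inverse_rescale: "r \<noteq> 0 \<Longrightarrow> rescale (inverse r) (rescale r x) = x"
  by (cases x) (simp add: rescale_def field_simps)

lemma inj_rescale: "r \<noteq> 0 \<Longrightarrow> inj (rescale r)"
  by (metis injI rescale_inverse_rescale)

lemma form_rescale_inverse: "r \<noteq> 0 \<Longrightarrow> form n (rescale (inverse r) x) y = form n x (rescale r y)"
  by (cases x; cases y) (simp add: rescale_def form_def field_simps)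

lemma form_rescale: "r \<noteq> 0 \<Longrightarrow> form n (rescale r x) (rescale r y) = form n x y"
  using form_rescale_inverse[of r n "rescale r x" y] by (simp add: rescale_inverse_rescale)

lemma rescale_wadd: "rescale r (wadd x y) = wadd (rescale r x) (rescale r y)"
  by (cases x; cases y) (simp add: rescale_def wadd_def add_divide_distrib algebra_simps)

lemma rescale_wscale: "rescale r (wscale c x) = wscale c (rescale r x)"
  by (cases x) (simp add: rescale_def wscale_def)

lemma rescale_root: "rescale (real q) (root i j m) = root i j (int q * m)"
  by (simp add: rescale_def root_def)

lemma rescale_alpha_0: "rescale r (alpha n 0) = wsub (wscale r delta) (theta n)"
  by (simp add: rescale_def alpha_def wsub_def wadd_def wscale_def delta_def theta_def eps_diff_def)

lemma rescale_alpha: "i \<noteq> 0 \<Longrightarrow> rescale r (alpha n i) = alpha n i"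
  by (simp add: rescale_def alpha_def eps_diff_def)

lemma rescale_conj_refl:
  assumes "r \<noteq> 0" shows "rescale_conj r (refl n a) = refl n (rescale r a)"
proof
  fix x
  show "rescale_conj r (refl n a) x = refl n (rescale r a) x"
    unfolding rescale_conj_def comp_def refl_eq[of n a] rescale_wadd rescale_wscale
      rescale_rescale_inverse[OF assms] form_rescale_inverse[OF assms]
    by (simp add: refl_eq form_rescale[OF assms])
qed

lemma rescale_conj_comp: "r \<noteq> 0 \<Longrightarrow> rescale_conj r (f \<circ> g) = rescale_conj r f \<circ> rescale_conj r g"
  by (simp add: rescale_conj_def fun_eq_iff rescale_inverse_rescale)

lemma rescale_conj_id: "r \<noteq> 0 \<Longrightarrow> rescale_conj r id = id"
  by (simp add: rescale_conj_def fun_eq_iff rescale_rescale_inverse)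

lemma inj_rescale_conj:
  assumes "r \<noteq> 0" shows "inj (rescale_conj r)"
proof (rule injI)
  fix f g assume "rescale_conj r f = rescale_conj r g"
  then have "rescale (inverse r) \<circ> rescale_conj r f \<circ> rescale r
      = rescale (inverse r) \<circ> rescale_conj r g \<circ> rescale r"
    by simp
  then show "f = g" by (simp add: rescale_conj_def fun_eq_iff rescale_inverse_rescale[OF assms])
qed

lemma rescale_conj_gen_group_refl:
  assumes "r \<noteq> 0"
  shows "rescale_conj r ` gen_group (refl n ` A) = gen_group (refl n ` rescale r ` A)"
  by (simp add: gen_group_image_hom rescale_conj_id rescale_conj_comp assms image_image
      rescale_conj_refl)

lemma form_shifted_rho_coroot:
  assumes "i < n" "j < n" "i \<noteq> j"
  shows "form n (wadd (wscale c Lambda0) (rho_hat n)) (coroot n (root i j m))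
    = real j - real i + (c + real n) * of_int m"
  using assms by (simp add: coroot_root wadd_def wscale_def Lambda0_def rho_hat_def form_root_right)

lemma Delta_int_wscale_Lambda0:
  "Delta_int n (wscale c Lambda0)
    = {root i j m | i j m. i < n \<and> j < n \<and> i \<noteq> j \<and> (c + real n) * of_int m \<in> \<int>}"
proof -
  have "real j - real i + x \<in> \<int> \<longleftrightarrow> x \<in> \<int>" for i j :: nat and x :: real
    by (metis Ints_add Ints_diff Ints_of_nat add_diff_cancel_left')
  then show ?thesis
    unfolding Delta_int_def real_roots_eq by (auto simp: form_shifted_rho_coroot; blast)
qed

lemma Delta_zero_wscale_Lambda0:
  "Delta_zero n (wscale c Lambda0)
    = {root i j m | i j m. i < n \<and> j < n \<and> i \<noteq> j \<and> real j - real i + (c + real n) * of_int m = 0}"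
  unfolding Delta_zero_def real_roots_eq by (auto simp: form_shifted_rho_coroot; blast)

lemma frac_mult_in_Ints_iff_dvd:
  fixes p q :: nat and m :: int
  assumes "q \<noteq> 0" "coprime p q"
  shows "real p / real q * of_int m \<in> \<int> \<longleftrightarrow> int q dvd m"
proof
  assume "real p / real q * of_int m \<in> \<int>"
  then obtain z where "real p / real q * of_int m = of_int z" by (auto elim: Ints_cases)
  then have "real_of_int (int p * m) = real_of_int (int q * z)"
    using assms(1) by (simp add: field_simps)
  then have "int q dvd int p * m" by (metis dvd_triv_left of_int_eq_iff)
  moreover have "coprime (int q) (int p)" using assms(2) by (simp add: coprime_commute)
  ultimately show "int q dvd m" by (simp add: coprime_dvd_mult_right_iff)
next
  assume "int q dvd m"
  then obtain m' where "m = int q * m'" by blast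
  then show "real p / real q * of_int m \<in> \<int>" using assms(1) by simp
qed

lemma rescale_real_roots:
  "rescale (real q) ` real_roots n = {root i j (int q * m) | i j m. i < n \<and> j < n \<and> i \<noteq> j}"
  unfolding real_roots_eq by (force simp: rescale_root)

lemma Delta_int_rescale:
  assumes "q \<noteq> 0" "coprime p q" "k + real n = real p / real q"
  shows "Delta_int n (wscale k Lambda0) = rescale (real q) ` real_roots n"
  unfolding Delta_int_wscale_Lambda0 rescale_real_roots assms(3)
    frac_mult_in_Ints_iff_dvd[OF assms(1,2)]
  by (force elim!: dvdE)

lemma Delta_zero_rescale:
  assumes "q \<noteq> 0" "coprime p q" "k + real n = real p / real q" "k' + real n = real p"
  shows "Delta_zero n (wscale k Lambda0) = rescale (real q) ` Delta_zero n (wscale k' Lambda0)"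
proof -
  have cancel: "real p / real q * of_int (int q * m) = real p * of_int m" for m
    using assms(1) by simp
  show ?thesis
  proof (intro set_eqI iffI)
    fix x assume "x \<in> Delta_zero n (wscale k Lambda0)"
    then obtain i j m where x: "x = root i j m" "i < n" "j < n" "i \<noteq> j"
      and zero: "real j - real i + real p / real q * of_int m = 0"
      unfolding Delta_zero_wscale_Lambda0 assms(3) by blast
    then have "real p / real q * of_int m = real i - real j" by simp
    then have "int q dvd m"
      using frac_mult_in_Ints_iff_dvd[OF assms(1,2)] by (metis Ints_diff Ints_of_nat)
    then obtain m' where m: "m = int q * m'" by (rule dvdE)
    then have "real j - real i + real p * of_int m' = 0" using zero cancel by simp
    then have "root i j m' \<in> Delta_zero n (wscale k' Lambda0)"
      unfolding Delta_zero_wscale_Lambda0 assms(4) using x by blast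
    moreover have "x = rescale (real q) (root i j m')" using x(1) m by (simp add: rescale_root)
    ultimately show "x \<in> rescale (real q) ` Delta_zero n (wscale k' Lambda0)" by blast
  next
    fix x assume "x \<in> rescale (real q) ` Delta_zero n (wscale k' Lambda0)"
    then obtain i j m where x: "x = rescale (real q) (root i j m)" "i < n" "j < n" "i \<noteq> j"
      and zero: "real j - real i + real p * of_int m = 0"
      unfolding Delta_zero_wscale_Lambda0 assms(4) by blast
    then have "real j - real i + real p / real q * of_int (int q * m) = 0" using cancel by simp
    moreover have "x = root i j (int q * m)" using x(1) by (simp add: rescale_root)
    ultimately show "x \<in> Delta_zero n (wscale k Lambda0)"
      unfolding Delta_zero_wscale_Lambda0 assms(3) using x by blast
  qed
qed

lemma W_int_rescale:
  assumes "n \<ge> 3" "r \<noteq> 0" "Delta_int n lam = rescale r ` real_roots n"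
  shows "W_int n lam = rescale_conj r ` W_aff n"
  unfolding W_int_def assms(3) W_aff_eq_real_roots[OF assms(1)]
    rescale_conj_gen_group_refl[OF assms(2)] ..

section \<open>Simple roots\<close>

definition indecomposable :: "wt set \<Rightarrow> wt set" where
  "indecomposable P = {x \<in> P. \<not> (\<exists>y\<in>P. \<exists>z\<in>P. x = wadd y z)}"

lemma indecomposable_image:
  assumes "inj f" "\<And>x y. f (wadd x y) = wadd (f x) (f y)"
  shows "indecomposable (f ` P) = f ` indecomposable P"
proof -
  have sum_iff: "f x = wadd (f y) (f z) \<longleftrightarrow> x = wadd y z" for x y z
    by (simp only: assms(2)[symmetric] inj_eq[OF assms(1)])
  have "f x \<in> indecomposable (f ` P) \<longleftrightarrow> x \<in> indecomposable P" if "x \<in> P" for x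
    using that unfolding indecomposable_def by (simp add: sum_iff)
  moreover have "indecomposable (f ` P) \<subseteq> f ` P" "indecomposable P \<subseteq> P"
    unfolding indecomposable_def by auto
  ultimately show ?thesis by (auto simp: inj_image_mem_iff[OF assms(1)])
qed

(* The linear form taking the value 1 on every simple root alpha n i. *)
definition height :: "nat \<Rightarrow> wt \<Rightarrow> real" where
  "height n x = (case x of (c, v, d) \<Rightarrow> real n * d - (\<Sum>t<n. real t * v t))"

lemma height_wadd: "height n (wadd x y) = height n x + height n y"
  by (cases x; cases y) (simp add: height_def wadd_def algebra_simps sum.distrib)

lemma height_root: "i < n \<Longrightarrow> j < n \<Longrightarrow> height n (root i j m) = real n * of_int m - real i + real j"
  using sum_mult_indicator_diff[of i n j real] by (simp add: height_def root_def mult.commute)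

lemma one_le_height:
  assumes "x \<in> pos_real_roots n" shows "1 \<le> height n x"
proof -
  obtain i j m where x: "x = root i j m" "i < n" "j < n" "0 < m \<or> m = 0 \<and> i < j"
    using assms unfolding pos_real_roots_eq by blast
  then have height: "height n x = real n * of_int m - real i + real j"
    by (simp add: height_root)
  show ?thesis
  proof (cases "0 < m")
    case True
    then have "real n \<le> real n * of_int m" by (simp add: mult_le_cancel_left1)
    moreover have "real i + 1 \<le> real n" using x(2) by linarith
    ultimately show ?thesis using height by linarith
  qed (use x height in auto)
qed

lemma alpha_in_pos_real_roots: "n \<ge> 2 \<Longrightarrow> i < n \<Longrightarrow> alpha n i \<in> pos_real_roots n"
  by (cases "i = 0") (auto simp: alpha_0_eq alpha_eq root_in_pos_real_roots_iff)

lemma height_alpha: "n \<ge> 2 \<Longrightarrow> i < n \<Longrightarrow> height n (alpha n i) = 1"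
  by (cases "i = 0") (auto simp: alpha_0_eq alpha_eq height_root)

(* For n = 2 this fails: 2 delta - theta is not a sum of two positive real roots. *)
lemma pos_real_root_decompose:
  assumes "n \<ge> 3" "a \<noteq> b" "root a b m \<in> pos_real_roots n"
    and "root a b m \<notin> {alpha n i | i. i < n}"
  obtains c m1 m2 where "root a c m1 \<in> pos_real_roots n" "root c b m2 \<in> pos_real_roots n"
    "m = m1 + m2"
proof -
  note pos = root_in_pos_real_roots_iff
  have ab: "a < n" "b < n" "0 < m \<or> m = 0 \<and> a < b"
    using assms(2,3) by (simp_all add: pos)
  show thesis
  proof (cases "a < b")
    case True
    show thesis
    proof (cases "m = 0")
      case True
      have "b \<noteq> Suc a" using assms(4) ab alpha_eq[of "Suc a" n] True by auto
      then show thesis using ab \<open>a < b\<close> True by (intro that[of "Suc a" 0 0]) (simp_all add: pos)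
    next
      case False
      obtain c where c: "c < n" "c \<noteq> a" "c \<noteq> b" using third_index[OF assms(1)] by blast
      show thesis
      proof (cases "a < c")
        case True
        then show thesis using ab \<open>a < b\<close> False c by (intro that[of c 0 m]) (simp_all add: pos)
      next
        case False
        then show thesis using ab \<open>a < b\<close> \<open>m \<noteq> 0\<close> c by (intro that[of c m 0]) (simp_all add: pos)
      qed
    qed
  next
    case False
    then have "b < a" "0 < m" using assms(2) ab(3) by auto
    consider "a < n - 1" | "a = n - 1" "0 < b" | "a = n - 1" "b = 0"
      using ab(1) by linarith
    then show thesis
    proof cases
      case 1
      then show thesis using ab \<open>b < a\<close> \<open>0 < m\<close> by (intro that[of "n - 1" 0 m]) (simp_all add: pos)
    next
      case 2
      then show thesis using ab \<open>0 < m\<close> by (intro that[of 0 m 0]) (simp_all add: pos)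
    next
      case 3
      then have "root a b 1 = alpha n 0" using assms(1) by (simp add: alpha_0_eq)
      then have "m \<noteq> 1" using assms(1,4) by force
      then show thesis using 3 ab assms(1) \<open>0 < m\<close>
        by (intro that[of 1 1 "m - 1"]) (simp_all add: pos)
    qed
  qed
qed

lemma indecomposable_pos_real_roots:
  assumes "n \<ge> 3" shows "indecomposable (pos_real_roots n) = {alpha n i | i. i < n}"
proof
  show "indecomposable (pos_real_roots n) \<subseteq> {alpha n i | i. i < n}"
  proof
    fix x assume x: "x \<in> indecomposable (pos_real_roots n)"
    then have pos: "x \<in> pos_real_roots n" unfolding indecomposable_def by blast
    then obtain a b m where root: "x = root a b m" "a \<noteq> b"
      unfolding pos_real_roots_eq by blast
    show "x \<in> {alpha n i | i. i < n}"
    proof (rule ccontr)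
      assume "x \<notin> {alpha n i | i. i < n}"
      then obtain c m1 m2 where "root a c m1 \<in> pos_real_roots n" "root c b m2 \<in> pos_real_roots n"
        "m = m1 + m2"
        using pos_real_root_decompose[OF assms root(2)] pos root(1) by blast
      moreover have "x = wadd (root a c m1) (root c b m2)"
        using root(1) \<open>m = m1 + m2\<close> by (simp add: wadd_root_root)
      ultimately show False using x unfolding indecomposable_def by blast
    qed
  qed
  show "{alpha n i | i. i < n} \<subseteq> indecomposable (pos_real_roots n)"
  proof
    fix x assume "x \<in> {alpha n i | i. i < n}"
    then obtain i where i: "x = alpha n i" "i < n" by blast
    have "x \<noteq> wadd y z" if "y \<in> pos_real_roots n" "z \<in> pos_real_roots n" for y z
      using one_le_height[OF that(1)] one_le_height[OF that(2)] height_alpha[of n i] assms i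
      by (auto simp: height_wadd)
    moreover have "x \<in> pos_real_roots n" using alpha_in_pos_real_roots[of n i] assms i by simp
    ultimately show "x \<in> indecomposable (pos_real_roots n)"
      unfolding indecomposable_def by blast
  qed
qed

lemma rescale_pos_real_roots:
  assumes "q \<noteq> 0"
  shows "rescale (real q) ` real_roots n \<inter> pos_real_roots n = rescale (real q) ` pos_real_roots n"
proof (intro set_eqI iffI)
  fix x assume "x \<in> rescale (real q) ` real_roots n \<inter> pos_real_roots n"
  then obtain i j m where x: "x = rescale (real q) (root i j m)" "i \<noteq> j" "x \<in> pos_real_roots n"
    unfolding real_roots_eq by blast
  then have "root i j m \<in> pos_real_roots n"
    using assms by (simp add: rescale_root root_in_pos_real_roots_iff zero_less_mult_iff)
  then show "x \<in> rescale (real q) ` pos_real_roots n" using x(1) by blast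
next
  fix x assume "x \<in> rescale (real q) ` pos_real_roots n"
  then obtain i j m
    where x: "x = rescale (real q) (root i j m)" "i \<noteq> j" "root i j m \<in> pos_real_roots n"
    unfolding pos_real_roots_eq by blast
  then have "root i j m \<in> real_roots n" "x \<in> pos_real_roots n"
    using assms by (auto simp: rescale_root root_in_pos_real_roots_iff root_in_real_roots_iff)
  then show "x \<in> rescale (real q) ` real_roots n \<inter> pos_real_roots n" using x(1) by blast
qed

lemma simple_int_rescale:
  assumes "n \<ge> 3" "q \<noteq> 0" "Delta_int n lam = rescale (real q) ` real_roots n"
  shows "simple_int n lam = rescale (real q) ` {alpha n i | i. i < n}"
proof -
  have "simple_int n lam = indecomposable (rescale (real q) ` pos_real_roots n)"
    unfolding simple_int_def indecomposable_def Delta_int_pos_def assms(3)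
      rescale_pos_real_roots[OF assms(2)] ..
  also have "\<dots> = rescale (real q) ` {alpha n i | i. i < n}"
    using assms(1,2) by (simp add: indecomposable_image inj_rescale rescale_wadd
        indecomposable_pos_real_roots)
  finally show ?thesis .
qed

theorem mainTheorem6:
  fixes n q :: nat and k :: real and beta0 :: wt
  assumes "n \<ge> 3" and "q \<ge> 1" and "gcd q (n - 1) = 1"
    and "k = - real n + real (n - 1) / real q"
    and "beta0 = wsub (wscale (real q) delta) (theta n)"
  shows "\<exists>\<sigma>. coxeter_iso \<sigma> (W_aff n) (S_aff n) (W_int n (wscale k Lambda0)) (S_int n (wscale k Lambda0))
           \<and> \<sigma> (refl n (alpha n 0)) = refl n beta0
           \<and> (\<forall>i\<in>{1..n-1}. \<sigma> (refl n (alpha n i)) = refl n (alpha n i))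
           \<and> \<sigma> ` W_zero n (wscale (-1) Lambda0) = W_zero n (wscale k Lambda0)"
proof (intro exI conjI)
  let ?\<sigma> = "rescale_conj (real q)"
  have q: "q \<noteq> 0" "real q \<noteq> 0" using assms(2) by simp_all
  have coprime: "coprime (n - 1) q" using assms(3) by (simp add: coprime_iff_gcd_eq_1 gcd.commute)
  have Delta: "Delta_int n (wscale k Lambda0) = rescale (real q) ` real_roots n"
    using Delta_int_rescale[OF q(1) coprime] assms(4) by simp
  have W: "W_int n (wscale k Lambda0) = ?\<sigma> ` W_aff n"
    by (rule W_int_rescale[OF assms(1) q(2) Delta])
  have "S_aff n = refl n ` {alpha n i | i. i < n}" unfolding S_aff_def by blast
  then have S: "S_int n (wscale k Lambda0) = ?\<sigma> ` S_aff n"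
    by (simp add: S_int_def simple_int_rescale[OF assms(1) q(1) Delta] image_image
        rescale_conj_refl[OF q(2)])
  show "coxeter_iso ?\<sigma> (W_aff n) (S_aff n) (W_int n (wscale k Lambda0)) (S_int n (wscale k Lambda0))"
    unfolding coxeter_iso_def bij_betw_def W S
    using inj_rescale_conj[OF q(2)] by (auto intro: inj_on_subset rescale_conj_comp[OF q(2)])
  show "?\<sigma> (refl n (alpha n 0)) = refl n beta0"
    by (simp add: rescale_conj_refl[OF q(2)] rescale_alpha_0 assms(5))
  show "\<forall>i\<in>{1..n-1}. ?\<sigma> (refl n (alpha n i)) = refl n (alpha n i)"
    by (simp add: rescale_conj_refl[OF q(2)] rescale_alpha)
  show "?\<sigma> ` W_zero n (wscale (-1) Lambda0) = W_zero n (wscale k Lambda0)"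
    using Delta_zero_rescale[OF q(1) coprime, of k n "-1"] assms(1,4)
    by (simp add: W_zero_def rescale_conj_gen_group_refl[OF q(2)])
qed

end
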